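(* Consider the complex polynomial optimization problem $\inf\{f : g_j\ge0,\ j\in[m]\}$ with $\mathscr A=\mathrm{supp}(f)\cup\bigcup_{j=1}^m\mathrm{supp}(g_j)$, and let $\mathbf r\in\{0,1\}^n$ be any sign symmetry of $\mathscr A$. Assume the chordal extension rule used to define $G^{(k)}_{d,l,j}=\overline{F^{(k)}_{d,l,j}}$ only adds edges between nodes lying in the same connected component of $F^{(k)}_{d,l,j}$. Let $d\ge d_{\min}$ and $k\ge1$. Then for every $l\in[p]$, every $j\in J_l$ and all $\beta,\gamma\in\mathbb N^{n_l}_{d-d_j}$ with $\{\beta,\gamma\}\in E(G^{(k)}_{d,l,j})$, one has $\mathbf r^T(\beta+\gamma)\equiv0\pmod2$.
   Context: Notation: $[n]=\{1,\dots,n\}$; $\mathbb N^n_t=\{\alpha\in\mathbb N^n:\sum_i\alpha_i\le t\}$. Let $\mathbf z=(z_1,\dots,z_n)$ be complex variables and $\bar{\mathbf z}$ their conjugates. A polynomial $p\in\mathbb C[\mathbf z,\bar{\mathbf z}]$ is written $p=\sum_{(\beta,\gamma)}p_{\beta,\gamma}\mathbf z^\beta\bar{\mathbf z}^\gamma$; its support is $\mathrm{supp}(p)=\{(\beta,\gamma)\in\mathbb N^n\times\mathbb N^n:p_{\beta,\gamma}\neq0\}$ and $\deg p=\max\{|\beta|+|\gamma|:(\beta,\gamma)\in\mathrm{supp}(p)\}$. $p$ is Hermitian if $p_{\beta,\gamma}=\overline{p_{\gamma,\beta}}$. For $(\beta,\gamma)\in\mathbb N^n\times\mathbb N^n$ and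 $\mathscr B\subseteq\mathbb N^n\times\mathbb N^n$, $(\beta,\gamma)+\mathscr B=\{(\beta+\beta',\gamma+\gamma'):(\beta',\gamma')\in\mathscr B\}$. The problem has Hermitian $f,g_1,\dots,g_m$; $d_j=\lceil\deg g_j/2\rceil$, $d_0=0$, $g_0=1$, $d_{\min}=\max\{\lceil\deg f/2\rceil,d_1,\dots,d_m\}$. Sign symmetries: a sign symmetry of $\mathscr A\subseteq\mathbb N^n\times\mathbb N^n$ is a vector $\mathbf r\in\{0,1\}^n$ such that $\mathbf r^T(\beta+\gamma)\equiv0\pmod 2$ for all $(\beta,\gamma)\in\mathscr A$. Graphs: undirected, simple. A chordal extension $\overline G$ of $G$ is a chordal graph on the same nodes containing $G$; a fixed rule $G\mapsto\overline G$ is used, satisfying $G\subseteq H\Rightarrow\overline G\subseteq\overline H$. Correlative sparsity: fix $d\ge d_{\min}$ and let $J'=\{j\in[m]:d_j=d\}$. For $\alpha\in\mathbb N^n$ let $\mathrm{supp}(\alpha)=\{i:\alpha_i\ne0\}$, and $\mathrm{var}(p)=\bigcup_{(\beta,\gamma)\in\mathrm{supp}(p)}(\mathrm{supp}(\beta)\cup\mathrm{supp}(\gamma))$. The csp graph $G^{\mathrm{csp}}$ has nodes $[n]$ and an edge $\{i,i'\}$ ($i\neq i'$) iff either (i) some $(\beta,\gamma)\in\mathrm{supp}(f)\cup\bigcup_{j\in J'}\mathrm{supp}(g_j)$ has $\{i,i'\}\subseteq\mathrm{supp}(\beta)\cup\mathrm{supp}(\gamma)$, or (ii) some $j\in[m]\setminus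 J'$ has $\{i,i'\}\subseteq\mathrm{var}(g_j)$. Let $I_1,\dots,I_p$ be the maximal cliques of a chordal extension of $G^{\mathrm{csp}}$, $n_l=|I_l|$, and let $J_1,\dots,J_p$ be pairwise disjoint with union $[m]\setminus J'$ and $\mathrm{var}(g_j)\subseteq I_l$ for $j\in J_l$. Correlative-term sparsity graphs: identify $\mathbb N^{n_l}_t$ with $\{\alpha\in\mathbb N^n_t:\mathrm{supp}(\alpha)\subseteq I_l\}$ by zero-padding. For a graph $G$ with nodes in $\mathbb N^n$ and Hermitian $g$, $\mathrm{supp}_g(G)=\{(\beta+\beta',\gamma+\gamma'):\ (\beta=\gamma\in V(G)\text{ or }\{\beta,\gamma\}\in E(G)),\ (\beta',\gamma')\in\mathrm{supp}(g)\}$. Let $\mathscr A_l=\{(\beta,\gamma)\in\mathscr A:\mathrm{supp}(\beta)\cup\mathrm{supp}(\gamma)\subseteq I_l\}$. Let $G^{(0)}_{d,l,0}$ be the graph on $\mathbb N^{n_l}_d$ with edges $\{\beta,\gamma\}$, $\beta\ne\gamma$, $(\beta,\gamma)\in\mathscr A_l$, and for $j\in J_l$ let $G^{(0)}_{d,l,j}$ be the graph on $\mathbb N^{n_l}_{d-d_j}$ with no edges. For $k\ge1$ let $\mathscr C^{(k-1)}_d=\bigcup_{l=1}^p\bigcup_{j\in\{0\}\cup J_l}\mathrm{supp}_{g_j}(G^{(k-1)}_{d,l,j})$; for $j\in\{0\}\cup J_l$, $F^{(k)}_{d,l,j}$ is the graph on $\mathbb N^{n_l}_{d-d_j}$ with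 edges $\{\beta,\gamma\}$, $\beta\ne\gamma$, such that $((\beta,\gamma)+\mathrm{supp}(g_j))\cap\mathscr C^{(k-1)}_d\ne\emptyset$, and $G^{(k)}_{d,l,j}=\overline{F^{(k)}_{d,l,j}}$. *)

theory Defs
  imports Complex_Main
begin

text \<open>Variables are indexed by [n] = {1..n}. A multi-index is a function nat => nat
  (zero outside [n]); a polynomial in C[z, conj z] is its coefficient function on pairs
  (beta, gamma) of multi-indices.\<close>

type_synonym mi = "nat \<Rightarrow> nat"
type_synonym cpoly = "mi \<times> mi \<Rightarrow> complex"
type_synonym 'a graph = "'a set \<times> 'a set set"

definition mi_supp :: "mi \<Rightarrow> nat set" where
  "mi_supp \<alpha> = {i. \<alpha> i \<noteq> 0}"

definition mi_add :: "mi \<Rightarrow> mi \<Rightarrow> mi" where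
  "mi_add \<alpha> \<beta> = (\<lambda>i. \<alpha> i + \<beta> i)"

definition mi_deg :: "nat \<Rightarrow> mi \<Rightarrow> nat" where
  "mi_deg n \<alpha> = (\<Sum>i=1..n. \<alpha> i)"

definition psupp :: "cpoly \<Rightarrow> (mi \<times> mi) set" where
  "psupp p = {(\<beta>, \<gamma>). p (\<beta>, \<gamma>) \<noteq> 0}"

definition is_cpoly :: "nat \<Rightarrow> cpoly \<Rightarrow> bool" where
  "is_cpoly n p \<longleftrightarrow> finite (psupp p) \<and>
     (\<forall>(\<beta>, \<gamma>) \<in> psupp p. mi_supp \<beta> \<subseteq> {1..n} \<and> mi_supp \<gamma> \<subseteq> {1..n})"

definition hermitian :: "cpoly \<Rightarrow> bool" where
  "hermitian p \<longleftrightarrow> (\<forall>\<beta> \<gamma>. p (\<beta>, \<gamma>) = cnj (p (\<gamma>, \<beta>)))"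

definition pdeg :: "nat \<Rightarrow> cpoly \<Rightarrow> nat" where
  "pdeg n p = Max ({mi_deg n \<beta> + mi_deg n \<gamma> | \<beta> \<gamma>. (\<beta>, \<gamma>) \<in> psupp p} \<union> {0})"

definition one_poly :: cpoly where
  "one_poly = (\<lambda>(\<beta>, \<gamma>). if \<beta> = (\<lambda>_. 0) \<and> \<gamma> = (\<lambda>_. 0) then 1 else 0)"

definition pvar :: "cpoly \<Rightarrow> nat set" where
  "pvar p = (\<Union>(\<beta>, \<gamma>) \<in> psupp p. mi_supp \<beta> \<union> mi_supp \<gamma>)"

definition half_deg :: "nat \<Rightarrow> cpoly \<Rightarrow> nat" where
  "half_deg n p = (pdeg n p + 1) div 2"

definition gext :: "(nat \<Rightarrow> cpoly) \<Rightarrow> nat \<Rightarrow> cpoly" where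
  "gext g j = (if j = 0 then one_poly else g j)"

definition dj :: "nat \<Rightarrow> (nat \<Rightarrow> cpoly) \<Rightarrow> nat \<Rightarrow> nat" where
  "dj n g j = (if j = 0 then 0 else half_deg n (g j))"

definition d_min :: "nat \<Rightarrow> cpoly \<Rightarrow> (nat \<Rightarrow> cpoly) \<Rightarrow> nat \<Rightarrow> nat" where
  "d_min n f g m = Max ({half_deg n f} \<union> {dj n g j | j. j \<in> {1..m}})"

definition supp_all :: "cpoly \<Rightarrow> (nat \<Rightarrow> cpoly) \<Rightarrow> nat \<Rightarrow> (mi \<times> mi) set" where
  "supp_all f g m = psupp f \<union> (\<Union>j\<in>{1..m}. psupp (g j))"

definition sign_symmetry :: "nat \<Rightarrow> (nat \<Rightarrow> nat) \<Rightarrow> (mi \<times> mi) set \<Rightarrow> bool" where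
  "sign_symmetry n r A \<longleftrightarrow> (\<forall>i\<in>{1..n}. r i \<in> {0, 1}) \<and>
     (\<forall>(\<beta>, \<gamma>) \<in> A. even (\<Sum>i=1..n. r i * (\<beta> i + \<gamma> i)))"

definition wf_graph :: "'a graph \<Rightarrow> bool" where
  "wf_graph G \<longleftrightarrow> (\<forall>e \<in> snd G. \<exists>x y. x \<noteq> y \<and> x \<in> fst G \<and> y \<in> fst G \<and> e = {x, y})"

definition chordal :: "'a graph \<Rightarrow> bool" where
  "chordal G \<longleftrightarrow> (\<forall>cs. distinct cs \<and> length cs \<ge> 4 \<and> set cs \<subseteq> fst G \<and>
      (\<forall>i < length cs. {cs ! i, cs ! ((i + 1) mod length cs)} \<in> snd G) \<longrightarrow>
      (\<exists>i j. i < length cs \<and> j < length cs \<and> i \<noteq> j \<and>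
         j \<noteq> (i + 1) mod length cs \<and> i \<noteq> (j + 1) mod length cs \<and>
         {cs ! i, cs ! j} \<in> snd G))"

definition subgraph :: "'a graph \<Rightarrow> 'a graph \<Rightarrow> bool" where
  "subgraph G H \<longleftrightarrow> fst G \<subseteq> fst H \<and> snd G \<subseteq> snd H"

definition chordal_ext_rule :: "('a graph \<Rightarrow> 'a graph) \<Rightarrow> bool" where
  "chordal_ext_rule ext \<longleftrightarrow>
     (\<forall>G. wf_graph G \<and> finite (fst G) \<longrightarrow>
        wf_graph (ext G) \<and> fst (ext G) = fst G \<and> snd G \<subseteq> snd (ext G) \<and> chordal (ext G)) \<and>
     (\<forall>G H. wf_graph G \<and> finite (fst G) \<and> wf_graph H \<and> finite (fst H) \<and> subgraph G H
        \<longrightarrow> subgraph (ext G) (ext H))"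

definition connected_in :: "'a graph \<Rightarrow> 'a \<Rightarrow> 'a \<Rightarrow> bool" where
  "connected_in G x y \<longleftrightarrow> (x, y) \<in> {(a, b). {a, b} \<in> snd G}\<^sup>*"

definition ext_within_components :: "('a graph \<Rightarrow> 'a graph) \<Rightarrow> 'a graph \<Rightarrow> bool" where
  "ext_within_components ext G \<longleftrightarrow>
     (\<forall>x y. {x, y} \<in> snd (ext G) \<longrightarrow> connected_in G x y)"

definition is_clique :: "'a graph \<Rightarrow> 'a set \<Rightarrow> bool" where
  "is_clique G C \<longleftrightarrow> C \<subseteq> fst G \<and> (\<forall>x\<in>C. \<forall>y\<in>C. x \<noteq> y \<longrightarrow> {x, y} \<in> snd G)"

definition maximal_clique :: "'a graph \<Rightarrow> 'a set \<Rightarrow> bool" where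
  "maximal_clique G C \<longleftrightarrow> is_clique G C \<and> (\<forall>D. is_clique G D \<and> C \<subseteq> D \<longrightarrow> D = C)"

definition Jprime :: "nat \<Rightarrow> (nat \<Rightarrow> cpoly) \<Rightarrow> nat \<Rightarrow> nat \<Rightarrow> nat set" where
  "Jprime n g m d = {j \<in> {1..m}. dj n g j = d}"

definition csp_graph :: "nat \<Rightarrow> cpoly \<Rightarrow> (nat \<Rightarrow> cpoly) \<Rightarrow> nat \<Rightarrow> nat \<Rightarrow> nat graph" where
  "csp_graph n f g m d = ({1..n},
     {{i, i'} | i i'. i \<in> {1..n} \<and> i' \<in> {1..n} \<and> i \<noteq> i' \<and>
        ((\<exists>(\<beta>, \<gamma>) \<in> psupp f \<union> (\<Union>j\<in>Jprime n g m d. psupp (g j)).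
            {i, i'} \<subseteq> mi_supp \<beta> \<union> mi_supp \<gamma>) \<or>
         (\<exists>j \<in> {1..m} - Jprime n g m d. {i, i'} \<subseteq> pvar (g j)))})"

text \<open>N^{n_l}_t identified with multi-indices supported in the clique I_l, of degree <= t\<close>
definition nodes :: "nat set \<Rightarrow> nat \<Rightarrow> mi set" where
  "nodes I t = {\<alpha>. mi_supp \<alpha> \<subseteq> I \<and> sum \<alpha> I \<le> t}"

definition supp_g :: "mi graph \<Rightarrow> cpoly \<Rightarrow> (mi \<times> mi) set" where
  "supp_g G g = {(mi_add \<beta> \<beta>', mi_add \<gamma> \<gamma>') | \<beta> \<gamma> \<beta>' \<gamma>'.
      (\<beta> = \<gamma> \<and> \<beta> \<in> fst G \<or> {\<beta>, \<gamma>} \<in> snd G) \<and> (\<beta>', \<gamma>') \<in> psupp g}"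

definition restrict_supp :: "(mi \<times> mi) set \<Rightarrow> nat set \<Rightarrow> (mi \<times> mi) set" where
  "restrict_supp A I = {(\<beta>, \<gamma>) \<in> A. mi_supp \<beta> \<union> mi_supp \<gamma> \<subseteq> I}"

definition G0 :: "nat \<Rightarrow> cpoly \<Rightarrow> (nat \<Rightarrow> cpoly) \<Rightarrow> nat \<Rightarrow> (nat \<Rightarrow> nat set) \<Rightarrow> nat
                  \<Rightarrow> nat \<Rightarrow> nat \<Rightarrow> mi graph" where
  "G0 n f g m I d l j = (if j = 0 then
      (nodes (I l) d,
       {{\<beta>, \<gamma>} | \<beta> \<gamma>. \<beta> \<in> nodes (I l) d \<and> \<gamma> \<in> nodes (I l) d \<and> \<beta> \<noteq> \<gamma> \<and>
          (\<beta>, \<gamma>) \<in> restrict_supp (supp_all f g m) (I l)})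
    else (nodes (I l) (d - dj n g j), {}))"

definition Cset :: "(nat \<Rightarrow> cpoly) \<Rightarrow> nat \<Rightarrow> (nat \<Rightarrow> nat set) \<Rightarrow> (nat \<Rightarrow> nat \<Rightarrow> mi graph)
                    \<Rightarrow> (mi \<times> mi) set" where
  "Cset g p J Gk = (\<Union>l\<in>{1..p}. \<Union>j\<in>insert 0 (J l). supp_g (Gk l j) (gext g j))"

definition Fgraph :: "nat \<Rightarrow> (nat \<Rightarrow> cpoly) \<Rightarrow> (nat \<Rightarrow> nat set) \<Rightarrow> nat \<Rightarrow> (mi \<times> mi) set
                      \<Rightarrow> nat \<Rightarrow> nat \<Rightarrow> mi graph" where
  "Fgraph n g I d C l j =
     (nodes (I l) (d - dj n g j),
      {{\<beta>, \<gamma>} | \<beta> \<gamma>. \<beta> \<in> nodes (I l) (d - dj n g j) \<and> \<gamma> \<in> nodes (I l) (d - dj n g j) \<and>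
         \<beta> \<noteq> \<gamma> \<and> (\<exists>(\<beta>', \<gamma>') \<in> psupp (gext g j). (mi_add \<beta> \<beta>', mi_add \<gamma> \<gamma>') \<in> C)})"

primrec Gseq :: "(mi graph \<Rightarrow> mi graph) \<Rightarrow> nat \<Rightarrow> cpoly \<Rightarrow> (nat \<Rightarrow> cpoly) \<Rightarrow> nat
                 \<Rightarrow> (nat \<Rightarrow> nat set) \<Rightarrow> nat \<Rightarrow> (nat \<Rightarrow> nat set) \<Rightarrow> nat
                 \<Rightarrow> nat \<Rightarrow> nat \<Rightarrow> nat \<Rightarrow> mi graph" where
  "Gseq ext n f g m I p J d 0 = G0 n f g m I d"
| "Gseq ext n f g m I p J d (Suc k) =
     (\<lambda>l j. ext (Fgraph n g I d (Cset g p J (Gseq ext n f g m I p J d k)) l j))"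

definition Fseq :: "(mi graph \<Rightarrow> mi graph) \<Rightarrow> nat \<Rightarrow> cpoly \<Rightarrow> (nat \<Rightarrow> cpoly) \<Rightarrow> nat
                 \<Rightarrow> (nat \<Rightarrow> nat set) \<Rightarrow> nat \<Rightarrow> (nat \<Rightarrow> nat set) \<Rightarrow> nat
                 \<Rightarrow> nat \<Rightarrow> nat \<Rightarrow> nat \<Rightarrow> mi graph" where
  "Fseq ext n f g m I p J d k l j =
     Fgraph n g I d (Cset g p J (Gseq ext n f g m I p J d (k - 1))) l j"

end

theory Submission
  imports Defs
begin

text \<open>Call two multi-indices equivalent when r^T alpha and r^T beta have the same parity.
  A term (beta, gamma) then satisfies r^T(beta + gamma) = 0 mod 2 exactly when beta and gamma
  are equivalent, and this equivalence is compatible with adding multi-indices. Hence every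
  construction of the hierarchy preserves it: supports of g_j (by the sign symmetry), the
  edges of G^(0), the sets supp_g, the edges of F^(k) (cancel the support term of g_j), and,
  since it is transitive, every edge that the chordal extension adds inside a connected
  component.\<close>

definition sign_weight :: "nat \<Rightarrow> (nat \<Rightarrow> nat) \<Rightarrow> mi \<Rightarrow> nat" where
  "sign_weight n r \<alpha> = (\<Sum>i=1..n. r i * \<alpha> i)"

definition same_parity :: "nat \<Rightarrow> (nat \<Rightarrow> nat) \<Rightarrow> mi \<Rightarrow> mi \<Rightarrow> bool" where
  "same_parity n r \<alpha> \<beta> \<longleftrightarrow> even (sign_weight n r \<alpha> + sign_weight n r \<beta>)"

definition parity_invariant :: "nat \<Rightarrow> (nat \<Rightarrow> nat) \<Rightarrow> (mi \<times> mi) set \<Rightarrow> bool" where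
  "parity_invariant n r A \<longleftrightarrow> (\<forall>(\<beta>, \<gamma>) \<in> A. same_parity n r \<beta> \<gamma>)"

definition parity_edges :: "nat \<Rightarrow> (nat \<Rightarrow> nat) \<Rightarrow> mi graph \<Rightarrow> bool" where
  "parity_edges n r G \<longleftrightarrow> (\<forall>\<beta> \<gamma>. {\<beta>, \<gamma>} \<in> snd G \<longrightarrow> same_parity n r \<beta> \<gamma>)"

lemma sign_weight_mi_add: "sign_weight n r (mi_add \<alpha> \<beta>) = sign_weight n r \<alpha> + sign_weight n r \<beta>"
  by (simp add: sign_weight_def mi_add_def sum.distrib distrib_left)

lemma same_parity_iff_even_sum:
  "same_parity n r \<beta> \<gamma> \<longleftrightarrow> even (\<Sum>i=1..n. r i * (\<beta> i + \<gamma> i))"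
  by (simp add: same_parity_def sign_weight_def sum.distrib distrib_left)

lemma same_parity_refl: "same_parity n r \<alpha> \<alpha>"
  by (simp add: same_parity_def)

lemma same_parity_sym: "same_parity n r \<alpha> \<beta> \<Longrightarrow> same_parity n r \<beta> \<alpha>"
  by (simp add: same_parity_def add.commute)

lemma same_parity_trans:
  "same_parity n r \<alpha> \<beta> \<Longrightarrow> same_parity n r \<beta> \<gamma> \<Longrightarrow> same_parity n r \<alpha> \<gamma>"
  by (auto simp: same_parity_def)

lemma same_parity_doubleton:
  "{\<alpha>, \<beta>} = {\<alpha>', \<beta>'} \<Longrightarrow> same_parity n r \<alpha>' \<beta>' \<Longrightarrow> same_parity n r \<alpha> \<beta>"
  by (auto simp: doubleton_eq_iff intro: same_parity_sym)

lemma same_parity_mi_add: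
  "same_parity n r \<alpha> \<beta> \<Longrightarrow> same_parity n r \<alpha>' \<beta>'
    \<Longrightarrow> same_parity n r (mi_add \<alpha> \<alpha>') (mi_add \<beta> \<beta>')"
  by (auto simp: same_parity_def sign_weight_mi_add)

lemma same_parity_mi_add_cancel:
  "same_parity n r (mi_add \<alpha> \<alpha>') (mi_add \<beta> \<beta>') \<Longrightarrow> same_parity n r \<alpha>' \<beta>'
    \<Longrightarrow> same_parity n r \<alpha> \<beta>"
  by (auto simp: same_parity_def sign_weight_mi_add)

lemma same_parity_connected_in:
  assumes "parity_edges n r G" and "connected_in G \<alpha> \<beta>"
  shows "same_parity n r \<alpha> \<beta>"
proof -
  have "(\<alpha>, \<beta>) \<in> {(a, b). {a, b} \<in> snd G}\<^sup>*"
    using assms(2) unfolding connected_in_def .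
  then show ?thesis
  proof (induction rule: rtrancl_induct)
    case base
    show ?case by (rule same_parity_refl)
  next
    case (step \<beta> \<gamma>)
    then show ?case
      using assms(1) by (auto simp: parity_edges_def intro: same_parity_trans)
  qed
qed

lemma parity_edges_ext_within_components:
  "ext_within_components ext G \<Longrightarrow> parity_edges n r G \<Longrightarrow> parity_edges n r (ext G)"
  by (auto simp: ext_within_components_def parity_edges_def intro: same_parity_connected_in)

lemma sign_symmetry_parity_invariant:
  "sign_symmetry n r A \<Longrightarrow> parity_invariant n r A"
  by (auto simp: sign_symmetry_def parity_invariant_def same_parity_iff_even_sum)

lemma parity_invariant_gext:
  assumes "parity_invariant n r (supp_all f g m)" and "j = 0 \<or> j \<in> {1..m}"
  shows "parity_invariant n r (psupp (gext g j))"
proof (cases "j = 0")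
  case True
  then show ?thesis
    by (auto simp: parity_invariant_def gext_def psupp_def one_poly_def same_parity_refl
        split: if_splits)
next
  case False
  then have "psupp (gext g j) \<subseteq> supp_all f g m"
    using assms(2) by (auto simp: gext_def supp_all_def)
  then show ?thesis
    using assms(1) by (auto simp: parity_invariant_def)
qed

lemma parity_edges_G0:
  assumes "parity_invariant n r (supp_all f g m)"
  shows "parity_edges n r (G0 n f g m I d l j)"
  using assms
  by (auto simp: parity_edges_def G0_def restrict_supp_def parity_invariant_def
      intro: same_parity_doubleton)

lemma parity_invariant_supp_g:
  assumes "parity_edges n r G" and "parity_invariant n r (psupp h)"
  shows "parity_invariant n r (supp_g G h)"
  using assms
  by (auto simp: parity_invariant_def parity_edges_def supp_g_def
      intro!: same_parity_mi_add same_parity_refl)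

lemma parity_invariant_Cset:
  assumes "\<And>l j. l \<in> {1..p} \<Longrightarrow> j \<in> insert 0 (J l) \<Longrightarrow>
      parity_edges n r (Gk l j) \<and> parity_invariant n r (psupp (gext g j))"
  shows "parity_invariant n r (Cset g p J Gk)"
proof -
  have "parity_invariant n r (supp_g (Gk l j) (gext g j))"
    if "l \<in> {1..p}" "j \<in> insert 0 (J l)" for l j
    using assms[OF that] by (blast intro: parity_invariant_supp_g)
  then show ?thesis
    unfolding Cset_def parity_invariant_def by fast
qed

lemma parity_edges_Fgraph:
  assumes C: "parity_invariant n r C" and gj: "parity_invariant n r (psupp (gext g j))"
  shows "parity_edges n r (Fgraph n g I d C l j)"
  unfolding parity_edges_def
proof (intro allI impI)
  fix \<alpha> \<alpha>' assume "{\<alpha>, \<alpha>'} \<in> snd (Fgraph n g I d C l j)"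
  then obtain \<beta> \<gamma> \<beta>' \<gamma>' where edge: "{\<alpha>, \<alpha>'} = {\<beta>, \<gamma>}"
    and s: "(\<beta>', \<gamma>') \<in> psupp (gext g j)" and c: "(mi_add \<beta> \<beta>', mi_add \<gamma> \<gamma>') \<in> C"
    unfolding Fgraph_def by auto
  have "same_parity n r \<beta> \<gamma>"
    using C c gj s unfolding parity_invariant_def by (blast intro: same_parity_mi_add_cancel)
  then show "same_parity n r \<alpha> \<alpha>'"
    using edge by (rule same_parity_doubleton[rotated])
qed

lemma parity_edges_Gseq:
  assumes A: "parity_invariant n r (supp_all f g m)"
    and J: "\<And>l. l \<in> {1..p} \<Longrightarrow> J l \<subseteq> {1..m}"
    and comp: "\<forall>k'\<ge>1. \<forall>l\<in>{1..p}. \<forall>j\<in>insert 0 (J l).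
        ext_within_components ext (Fseq ext n f g m I p J d k' l j)"
    and l: "l \<in> {1..p}" and j: "j \<in> insert 0 (J l)"
  shows "parity_edges n r (Gseq ext n f g m I p J d k l j)"
  using l j
proof (induction k arbitrary: l j)
  case 0
  show ?case using A by (simp add: parity_edges_G0)
next
  case (Suc k)
  have gext: "parity_invariant n r (psupp (gext g j'))"
    if "l' \<in> {1..p}" "j' \<in> insert 0 (J l')" for l' j'
    using parity_invariant_gext[OF A] J that by blast
  have "parity_invariant n r (Cset g p J (Gseq ext n f g m I p J d k))"
    by (rule parity_invariant_Cset) (simp add: Suc.IH gext)
  then have "parity_edges n r (Fseq ext n f g m I p J d (Suc k) l j)"
    unfolding Fseq_def diff_Suc_1 by (rule parity_edges_Fgraph) (rule gext[OF Suc.prems])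
  moreover have "ext_within_components ext (Fseq ext n f g m I p J d (Suc k) l j)"
    using comp Suc.prems by (metis One_nat_def Suc_le_mono zero_le)
  ultimately show ?case
    by (simp add: Fseq_def parity_edges_ext_within_components)
qed

theorem mainTheorem8:
  fixes n m p d k :: nat
    and f :: cpoly and g :: "nat \<Rightarrow> cpoly"
    and r :: "nat \<Rightarrow> nat"
    and ext_csp :: "nat graph \<Rightarrow> nat graph"
    and ext :: "mi graph \<Rightarrow> mi graph"
    and I J :: "nat \<Rightarrow> nat set"
  assumes f_poly: "is_cpoly n f" and f_herm: "hermitian f"
    and g_poly: "\<forall>j\<in>{1..m}. is_cpoly n (g j) \<and> hermitian (g j)"
    and sym: "sign_symmetry n r (supp_all f g m)"
    and rule_csp: "chordal_ext_rule ext_csp"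
    and rule: "chordal_ext_rule ext"
    and rule_comp: "\<forall>k'\<ge>1. \<forall>l\<in>{1..p}. \<forall>j\<in>insert 0 (J l).
        ext_within_components ext (Fseq ext n f g m I p J d k' l j)"
    and d_ge: "d \<ge> d_min n f g m"
    and I_inj: "inj_on I {1..p}"
    and I_cliques: "I ` {1..p} = {C. maximal_clique (ext_csp (csp_graph n f g m d)) C}"
    and J_disj: "\<forall>l\<in>{1..p}. \<forall>l'\<in>{1..p}. l \<noteq> l' \<longrightarrow> J l \<inter> J l' = {}"
    and J_union: "(\<Union>l\<in>{1..p}. J l) = {1..m} - Jprime n g m d"
    and J_var: "\<forall>l\<in>{1..p}. \<forall>j\<in>J l. pvar (g j) \<subseteq> I l"
    and k_ge: "k \<ge> 1"
  shows "\<forall>l\<in>{1..p}. \<forall>j\<in>J l. \<forall>\<beta> \<in> nodes (I l) (d - dj n g j). \<forall>\<gamma> \<in> nodes (I l) (d - dj n g j).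
           {\<beta>, \<gamma>} \<in> snd (Gseq ext n f g m I p J d k l j) \<longrightarrow>
           even (\<Sum>i=1..n. r i * (\<beta> i + \<gamma> i))"
proof (intro ballI impI)
  fix l j \<beta> \<gamma>
  assume l: "l \<in> {1..p}" and j: "j \<in> J l"
    and edge: "{\<beta>, \<gamma>} \<in> snd (Gseq ext n f g m I p J d k l j)"
  have J_sub: "J l' \<subseteq> {1..m}" if "l' \<in> {1..p}" for l'
    using J_union that by blast
  have "parity_edges n r (Gseq ext n f g m I p J d k l j)"
    using parity_edges_Gseq[OF sign_symmetry_parity_invariant[OF sym] J_sub rule_comp l] j
    by blast
  then show "even (\<Sum>i=1..n. r i * (\<beta> i + \<gamma> i))"
    using edge by (simp add: parity_edges_def same_parity_iff_even_sum)
qed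

end
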